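(* Let $A = A_s + A_i\epsilon\in\mathbb{DR}^{m\times n}$ with $A_s\in\mathbb{R}^{m\times n}$ of full column rank, and let $A = (Q_s + Q_i\epsilon)(R_s + R_i\epsilon)$ be a thin QR decomposition of $A$, i.e. $Q = Q_s+Q_i\epsilon\in\mathbb{DR}^{m\times n}$ satisfies $Q^{\top}Q = I_n$ and $R = R_s+R_i\epsilon\in\mathbb{DR}^{n\times n}$ is upper triangular with $R_s$ having positive diagonal entries. Then the dual Moore–Penrose generalized inverse of $A$ exists and equals $$A^{\dagger} = R_s^{-1}Q_s^{\top} + \big(R_s^{-1}Q_i^{\top} - R_s^{-1}R_iR_s^{-1}Q_s^{\top}\big)\epsilon.$$
   Context: A dual number is $a = a_s + a_i\epsilon$ with $a_s,a_i\in\mathbb{R}$, where $\epsilon^2=0$, $\epsilon\neq 0$; $\mathbb{DR}^{m\times n}$ denotes the set of dual matrices $A = A_s + A_i\epsilon$ with $A_s, A_i\in\mathbb{R}^{m\times n}$. Products use $\epsilon^2=0$: $(A_s+A_i\epsilon)(B_s+B_i\epsilon) = A_sB_s + (A_sB_i + A_iB_s)\epsilon$; transpose is $A^{\top}=A_s^{\top}+A_i^{\top}\epsilon$. A dual matrix is upper triangular if both parts are. The dual Moore–Penrose generalized inverse (DMPGI) of $A\in\mathbb{DR}^{m\times n}$ is a dual matrix $X\in\mathbb{DR}^{n\times m}$ satisfying $AXA = A$, $XAX = X$, $(AX)^{\top} = AX$, $(XA)^{\top} = XA$; it is denoted $A^{\dagger}$. *)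

theory Defs
  imports "HOL-Analysis.Analysis"
begin

text \<open>A dual matrix A = A_s + A_i eps is represented as the pair (A_s, A_i) of real matrices.
  Dimensions are index types: an m x n matrix is real^'n^'m.\<close>

type_synonym ('n, 'm) dmat = "(real^'n^'m) \<times> (real^'n^'m)"

definition dmult :: "('k::finite, 'm::finite) dmat \<Rightarrow> ('n::finite, 'k) dmat \<Rightarrow> ('n, 'm) dmat" where
  "dmult A B = (fst A ** fst B, fst A ** snd B + snd A ** fst B)"

definition dtranspose :: "('n::finite, 'm::finite) dmat \<Rightarrow> ('m, 'n) dmat" where
  "dtranspose A = (transpose (fst A), transpose (snd A))"

definition dident :: "('n::finite, 'n::finite) dmat" where
  "dident = (mat 1, 0)"

definition upper_tri :: "real^'n::{finite,wellorder}^'n::{finite,wellorder} \<Rightarrow> bool" where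
  "upper_tri M \<longleftrightarrow> (\<forall>i j. j < i \<longrightarrow> M $ i $ j = 0)"

definition dupper_tri :: "('n::{finite,wellorder}, 'n::{finite,wellorder}) dmat \<Rightarrow> bool" where
  "dupper_tri R \<longleftrightarrow> upper_tri (fst R) \<and> upper_tri (snd R)"

definition is_DMPGI :: "('n::finite, 'm::finite) dmat \<Rightarrow> ('m, 'n) dmat \<Rightarrow> bool" where
  "is_DMPGI A X \<longleftrightarrow>
     dmult (dmult A X) A = A \<and> dmult (dmult X A) X = X \<and>
     dtranspose (dmult A X) = dmult A X \<and> dtranspose (dmult X A) = dmult X A"

end

theory Submission
  imports Defs
begin

text \<open>Dual matrices with their product and transpose form an associative algebra with
  an anti-involution, so the classical argument for the uniqueness of the Moore-Penrose inverse
  applies verbatim. For existence, a dual matrix R = R_s + R_i eps with R_s invertible has the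
  two-sided inverse R_s^-1 - R_s^-1 R_i R_s^-1 eps, since eps^2 = 0. With Q^T Q = I, the matrix
  X = R^-1 Q^T satisfies X A = I and A X = Q Q^T, which is symmetric; these two facts alone give
  all four Penrose equations.\<close>

lemma matrix_add_rdistrib: "((A::real^'n^'m) + B) ** C = A ** C + B ** C"
  by (simp add: matrix_matrix_mult_def vec_eq_iff sum.distrib distrib_right)

lemma matrix_neg_lmul: "(- (A::real^'n^'m)) ** B = - (A ** B)"
  by (simp add: matrix_matrix_mult_def vec_eq_iff sum_negf)

lemma matrix_neg_rmul: "(A::real^'n^'m) ** (- B) = - (A ** B)"
  by (simp add: matrix_matrix_mult_def vec_eq_iff sum_negf)

lemma transpose_add: "transpose ((A::real^'n^'m) + B) = transpose A + transpose B"
  by (simp add: transpose_def vec_eq_iff)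

lemma matrix_inv_left_right:
  fixes M :: "real^'n^'n"
  assumes "invertible M"
  shows "matrix_inv M ** M = mat 1" and "M ** matrix_inv M = mat 1"
proof -
  have "M ** matrix_inv M = mat 1 \<and> matrix_inv M ** M = mat 1"
    using assms unfolding matrix_inv_def invertible_def by (rule someI_ex)
  then show "matrix_inv M ** M = mat 1" and "M ** matrix_inv M = mat 1" by auto
qed

lemma invertible_upper_tri:
  fixes M :: "real^'n::{finite,wellorder}^'n::{finite,wellorder}"
  assumes "upper_tri M" and "\<And>i. M $ i $ i \<noteq> 0"
  shows "invertible M"
proof -
  have "det M = (\<Prod>i\<in>UNIV. M $ i $ i)"
    using assms(1) by (intro det_upperdiagonal) (simp add: upper_tri_def)
  then show ?thesis
    using assms(2) by (simp add: invertible_det_nz)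
qed

lemma dmult_assoc:
  "dmult (dmult (A::('k::finite, 'm::finite) dmat) (B::('l::finite, 'k) dmat)) (C::('n::finite, 'l) dmat)
     = dmult A (dmult B C)"
  by (simp add: dmult_def matrix_mul_assoc matrix_add_ldistrib matrix_add_rdistrib add_ac)

lemma dmult_dident_left [simp]: "dmult dident A = A"
  by (simp add: dmult_def dident_def)

lemma dmult_dident_right [simp]: "dmult A dident = A"
  by (simp add: dmult_def dident_def)

lemma dtranspose_dmult:
  "dtranspose (dmult (A::('k::finite, 'm::finite) dmat) (B::('n::finite, 'k) dmat))
     = dmult (dtranspose B) (dtranspose A)"
  by (simp add: dmult_def dtranspose_def matrix_transpose_mul transpose_add add_ac)

lemma dtranspose_dtranspose [simp]: "dtranspose (dtranspose A) = A"
  by (simp add: dtranspose_def)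

lemma dtranspose_dident [simp]: "dtranspose dident = dident"
proof -
  have "transpose (0::real^'n^'n) = 0"
    by (simp add: transpose_def vec_eq_iff)
  then show ?thesis
    by (simp add: dtranspose_def dident_def)
qed

definition dual_inverse :: "('n::finite, 'n) dmat \<Rightarrow> ('n, 'n) dmat" where
  "dual_inverse R = (matrix_inv (fst R), - (matrix_inv (fst R) ** snd R ** matrix_inv (fst R)))"

lemma dual_inverse_left_right:
  assumes "invertible (fst R)"
  shows "dmult (dual_inverse R) R = dident" and "dmult R (dual_inverse R) = dident"
  using matrix_inv_left_right[OF assms]
  by (simp_all add: dmult_def dual_inverse_def dident_def matrix_neg_lmul matrix_neg_rmul
      matrix_mul_assoc[symmetric], simp_all add: matrix_mul_assoc)

lemma is_DMPGI_unique:
  assumes X: "is_DMPGI A X" and Y: "is_DMPGI A Y"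
  shows "X = Y"
proof -
  let ?At = "dtranspose A" and ?Xt = "dtranspose X" and ?Yt = "dtranspose Y"
  have x1: "dmult A (dmult X A) = A" and x2: "dmult X (dmult A X) = X"
    and x3: "dmult ?Xt ?At = dmult A X" and x4: "dmult ?At ?Xt = dmult X A"
    using X by (auto simp: is_DMPGI_def dmult_assoc dtranspose_dmult)
  have y1: "dmult A (dmult Y A) = A" and y2: "dmult Y (dmult A Y) = Y"
    and y3: "dmult ?Yt ?At = dmult A Y" and y4: "dmult ?At ?Yt = dmult Y A"
    using Y by (auto simp: is_DMPGI_def dmult_assoc dtranspose_dmult)
  have At_Y: "?At = dmult ?At (dmult ?Yt ?At)"
    by (metis y1 dtranspose_dmult dmult_assoc)
  have At_X: "?At = dmult (dmult ?At ?Xt) ?At"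
    by (metis x1 dtranspose_dmult dmult_assoc)
  have "X = dmult X (dmult ?Xt ?At)"
    using x2 x3 by simp
  also have "\<dots> = dmult X (dmult ?Xt (dmult ?At (dmult ?Yt ?At)))"
    using At_Y by simp
  also have "\<dots> = dmult X (dmult (dmult ?Xt ?At) (dmult ?Yt ?At))"
    by (simp add: dmult_assoc)
  also have "\<dots> = dmult (dmult X (dmult A X)) (dmult A Y)"
    by (simp add: x3 y3 dmult_assoc)
  also have "\<dots> = dmult X (dmult A Y)"
    using x2 by simp
  finally have X_eq: "X = dmult X (dmult A Y)" .
  have "Y = dmult (dmult ?At ?Yt) Y"
    using y2 y4 by (simp add: dmult_assoc)
  also have "\<dots> = dmult (dmult (dmult (dmult ?At ?Xt) ?At) ?Yt) Y"
    using At_X by simp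
  also have "\<dots> = dmult (dmult ?At ?Xt) (dmult (dmult ?At ?Yt) Y)"
    by (simp add: dmult_assoc)
  also have "\<dots> = dmult X (dmult A Y)"
    using y2 by (simp add: x4 y4 dmult_assoc)
  finally show ?thesis
    using X_eq by simp
qed

lemma is_DMPGI_if_left_inverse:
  assumes "dmult X A = dident" and "dtranspose (dmult A X) = dmult A X"
  shows "is_DMPGI A X"
  using assms by (simp add: is_DMPGI_def dmult_assoc)

lemma is_DMPGI_QR:
  assumes orth: "dmult (dtranspose Q) Q = dident" and inv: "invertible (fst R)"
  shows "is_DMPGI (dmult Q R) (dmult (dual_inverse R) (dtranspose Q))"
proof (rule is_DMPGI_if_left_inverse)
  have "dmult (dmult (dual_inverse R) (dtranspose Q)) (dmult Q R)
      = dmult (dual_inverse R) (dmult (dmult (dtranspose Q) Q) R)"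
    by (simp add: dmult_assoc)
  then show "dmult (dmult (dual_inverse R) (dtranspose Q)) (dmult Q R) = dident"
    by (simp add: orth dual_inverse_left_right(1)[OF inv])
  have "dmult R (dmult (dual_inverse R) (dtranspose Q)) = dtranspose Q"
    by (simp add: dmult_assoc[symmetric] dual_inverse_left_right(2)[OF inv])
  then have "dmult (dmult Q R) (dmult (dual_inverse R) (dtranspose Q)) = dmult Q (dtranspose Q)"
    by (simp add: dmult_assoc)
  then show "dtranspose (dmult (dmult Q R) (dmult (dual_inverse R) (dtranspose Q)))
      = dmult (dmult Q R) (dmult (dual_inverse R) (dtranspose Q))"
    by (simp add: dtranspose_dmult)
qed

theorem theorem5p1:
  fixes A Q :: "('n::{finite,wellorder}, 'm::finite) dmat"
    and R :: "('n::{finite,wellorder}, 'n::{finite,wellorder}) dmat"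
  assumes full_rank: "rank (fst A) = CARD('n)"
    and qr: "A = dmult Q R"
    and orth: "dmult (dtranspose Q) Q = dident"
    and tri: "dupper_tri R"
    and pos: "\<forall>i. fst R $ i $ i > 0"
  shows "is_DMPGI A
           (matrix_inv (fst R) ** transpose (fst Q),
            matrix_inv (fst R) ** transpose (snd Q)
              - matrix_inv (fst R) ** snd R ** matrix_inv (fst R) ** transpose (fst Q))
       \<and> (\<forall>X. is_DMPGI A X \<longrightarrow>
           X = (matrix_inv (fst R) ** transpose (fst Q),
                matrix_inv (fst R) ** transpose (snd Q)
                  - matrix_inv (fst R) ** snd R ** matrix_inv (fst R) ** transpose (fst Q)))"
proof -
  have "invertible (fst R)"
    using tri pos by (intro invertible_upper_tri) (auto simp: dupper_tri_def, metis less_irrefl)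
  then have "is_DMPGI A (dmult (dual_inverse R) (dtranspose Q))"
    unfolding qr using orth by (rule is_DMPGI_QR[rotated])
  moreover have "dmult (dual_inverse R) (dtranspose Q) =
      (matrix_inv (fst R) ** transpose (fst Q),
       matrix_inv (fst R) ** transpose (snd Q)
         - matrix_inv (fst R) ** snd R ** matrix_inv (fst R) ** transpose (fst Q))"
    by (simp add: dmult_def dual_inverse_def dtranspose_def matrix_neg_lmul)
  ultimately show ?thesis
    by (metis is_DMPGI_unique)
qed

end
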